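(* Let $\epsilon>0$, $n\ge1$, let $\mathbf{w}\in\mathbb{R}^d$ be non-increasing, and let $1\le k\le d-1$ with $\mathbf{w}^k_{max}>\mathbf{w}^k_{min}$. For the additive mechanism with parameters $(\epsilon,\mathbf{w},k)$, $$\mathrm{risk}_{\mathrm{MM}}=\frac{k|a_k-b_k|+(d-k)|b_k|}{n},\qquad\mathrm{risk}_{\mathrm{EM}}=\frac{k|a_k-b_k|+(d-k)|b_k|}{n}\ \text{(for every input vote)},\qquad\mathrm{risk}_{\mathrm{DD}}\le2k|a_k|.$$
   Context: Candidates are $C_1,\dots,C_d$; a vote is a linear ordering; the scored vote $v$ assigns score $w_j$ to the candidate at rank $j$. Let $\mathcal{C}^k$ be the set of $k$-element subsets of candidates, $\mathbf{w}^k_{max}=\sum_{j=1}^kw_j$, $\mathbf{w}^k_{min}=\sum_{j=d-k+1}^dw_j$, $W=\sum_jw_j$. The additive mechanism on input $v$ outputs $S\in\mathcal{C}^k$ with probability $$\Pr[S\mid v]=\frac{\sum_{C_{j'}\in S}v_{j'}-\mathbf{w}^k_{min}}{\mathbf{w}^k_{max}-\mathbf{w}^k_{min}}\cdot\frac{e^\epsilon-1}{\Phi}+\frac1\Phi,\qquad \Phi=\binom dk\frac{\frac kd(e^\epsilon-1)W-e^\epsilon\mathbf{w}^k_{min}+\mathbf{w}^k_{max}}{\mathbf{w}^k_{max}-\mathbf{w}^k_{min}},$$ and releases the private view $\tilde v_j=a_k[C_j\in S]-b_k$, where $a_k=\big[W(e^\epsilon-1)-\tfrac dke^\epsilon\mathbf{w}^k_{min}+\tfrac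 dk\mathbf{w}^k_{max}\big]\frac{d-1}{(d-k)(e^\epsilon-1)}$ and $b_k=\big[\tfrac{(k-1)(e^\epsilon-1)}{d-1}W-e^\epsilon\mathbf{w}^k_{min}+\mathbf{w}^k_{max}\big]\frac{d-1}{(d-k)(e^\epsilon-1)}$. Let $\mathcal{D}_{\tilde v}$ be the set of all possible private views, $n$ the number of voters. Risk metrics: $\mathrm{risk}_{\mathrm{MM}}=\max_{\tilde v\in\mathcal{D}_{\tilde v}}\frac{|\tilde v|_1}{n}$; $\mathrm{risk}_{\mathrm{EM}}=\mathbb{E}[\frac{|\tilde v|_1}{n}]$ over the mechanism's randomness for a given input; $\mathrm{risk}_{\mathrm{DD}}=\max_{\tilde v,\tilde v'\in\mathcal{D}_{\tilde v}}|\tilde v-\tilde v'|_1$. *)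

theory Defs
  imports Complex_Main
begin

text \<open>Candidates are indexed by 1..d, ranks by 1..d. Scores w : nat => real, w j = score at rank j.
A vote (linear ordering) is a bijection sigma of {1..d}; sigma j is the rank of candidate C_j.\<close>

definition wmax :: "(nat \<Rightarrow> real) \<Rightarrow> nat \<Rightarrow> nat \<Rightarrow> real" where
  "wmax w d k = (\<Sum>j=1..k. w j)"

definition wmin :: "(nat \<Rightarrow> real) \<Rightarrow> nat \<Rightarrow> nat \<Rightarrow> real" where
  "wmin w d k = (\<Sum>j=d-k+1..d. w j)"

definition Wtot :: "(nat \<Rightarrow> real) \<Rightarrow> nat \<Rightarrow> real" where
  "Wtot w d = (\<Sum>j=1..d. w j)"

definition is_vote :: "nat \<Rightarrow> (nat \<Rightarrow> nat) \<Rightarrow> bool" where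
  "is_vote d \<sigma> \<longleftrightarrow> bij_betw \<sigma> {1..d} {1..d}"

definition scored_vote :: "(nat \<Rightarrow> real) \<Rightarrow> (nat \<Rightarrow> nat) \<Rightarrow> nat \<Rightarrow> real" where
  "scored_vote w \<sigma> j = w (\<sigma> j)"

definition committees :: "nat \<Rightarrow> nat \<Rightarrow> nat set set" where
  "committees d k = {S. S \<subseteq> {1..d} \<and> card S = k}"

definition Phi :: "real \<Rightarrow> (nat \<Rightarrow> real) \<Rightarrow> nat \<Rightarrow> nat \<Rightarrow> real" where
  "Phi \<epsilon> w d k = real (d choose k) *
     ((real k / real d) * (exp \<epsilon> - 1) * Wtot w d - exp \<epsilon> * wmin w d k + wmax w d k)
     / (wmax w d k - wmin w d k)"

definition prob_add :: "real \<Rightarrow> (nat \<Rightarrow> real) \<Rightarrow> nat \<Rightarrow> nat \<Rightarrow> (nat \<Rightarrow> real) \<Rightarrow> nat set \<Rightarrow> real" where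
  "prob_add \<epsilon> w d k v S =
     ((\<Sum>j\<in>S. v j) - wmin w d k) / (wmax w d k - wmin w d k) * (exp \<epsilon> - 1) / Phi \<epsilon> w d k
     + 1 / Phi \<epsilon> w d k"

definition a_k :: "real \<Rightarrow> (nat \<Rightarrow> real) \<Rightarrow> nat \<Rightarrow> nat \<Rightarrow> real" where
  "a_k \<epsilon> w d k = (Wtot w d * (exp \<epsilon> - 1) - (real d / real k) * exp \<epsilon> * wmin w d k
       + (real d / real k) * wmax w d k) * (real d - 1) / ((real d - real k) * (exp \<epsilon> - 1))"

definition b_k :: "real \<Rightarrow> (nat \<Rightarrow> real) \<Rightarrow> nat \<Rightarrow> nat \<Rightarrow> real" where
  "b_k \<epsilon> w d k = ((real k - 1) * (exp \<epsilon> - 1) / (real d - 1) * Wtot w d - exp \<epsilon> * wmin w d k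
       + wmax w d k) * (real d - 1) / ((real d - real k) * (exp \<epsilon> - 1))"

definition priv_view :: "real \<Rightarrow> (nat \<Rightarrow> real) \<Rightarrow> nat \<Rightarrow> nat \<Rightarrow> nat set \<Rightarrow> nat \<Rightarrow> real" where
  "priv_view \<epsilon> w d k S j = a_k \<epsilon> w d k * (if j \<in> S then 1 else 0) - b_k \<epsilon> w d k"

definition l1 :: "nat \<Rightarrow> (nat \<Rightarrow> real) \<Rightarrow> real" where
  "l1 d x = (\<Sum>j=1..d. \<bar>x j\<bar>)"

definition views :: "real \<Rightarrow> (nat \<Rightarrow> real) \<Rightarrow> nat \<Rightarrow> nat \<Rightarrow> (nat \<Rightarrow> real) set" where
  "views \<epsilon> w d k = priv_view \<epsilon> w d k ` committees d k"

definition risk_MM :: "real \<Rightarrow> (nat \<Rightarrow> real) \<Rightarrow> nat \<Rightarrow> nat \<Rightarrow> nat \<Rightarrow> real" where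
  "risk_MM \<epsilon> w d k n = Max ((\<lambda>x. l1 d x / real n) ` views \<epsilon> w d k)"

definition risk_EM :: "real \<Rightarrow> (nat \<Rightarrow> real) \<Rightarrow> nat \<Rightarrow> nat \<Rightarrow> nat \<Rightarrow> (nat \<Rightarrow> real) \<Rightarrow> real" where
  "risk_EM \<epsilon> w d k n v =
     (\<Sum>S\<in>committees d k. prob_add \<epsilon> w d k v S * (l1 d (priv_view \<epsilon> w d k S) / real n))"

definition risk_DD :: "real \<Rightarrow> (nat \<Rightarrow> real) \<Rightarrow> nat \<Rightarrow> nat \<Rightarrow> real" where
  "risk_DD \<epsilon> w d k = Max ((\<lambda>(x, y). l1 d (\<lambda>j. x j - y j)) ` (views \<epsilon> w d k \<times> views \<epsilon> w d k))"

end

theory Submission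
  imports Defs
begin

text \<open>Every private view is a_k times the indicator of a k-element committee minus b_k, so all
views have the same l1-norm k |a_k - b_k| + (d - k) |b_k|. Hence the maximal risk is this value,
and so is the expected risk once the output probabilities of the mechanism sum to 1. That
normalisation combines a double count (each candidate lies in (d-1 choose k-1) committees) with
Phi > 0, which holds because the mean of the k lowest scores of a non-increasing w is at most the
mean of all scores. Two views differ by a_k times a difference of two indicators of k-sets,
whose l1-norm is at most 2k.\<close>

lemma sum_if_mem:
  fixes x y :: "'b::semiring_1"
  assumes "finite A" "S \<subseteq> A"
  shows "(\<Sum>j\<in>A. if j \<in> S then x else y) = of_nat (card S) * x + of_nat (card (A - S)) * y"
proof -
  have "(\<Sum>j\<in>A. if j \<in> S then x else y) = (\<Sum>j\<in>S. x) + (\<Sum>j\<in>A - S. y)"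
    using assms by (simp add: sum.If_cases Int_absorb1 Diff_eq)
  then show ?thesis by simp
qed

lemma wmin_le_mean:
  assumes mono: "\<And>i j. 1 \<le> i \<Longrightarrow> i \<le> j \<Longrightarrow> j \<le> d \<Longrightarrow> w j \<le> w i"
    and "k \<le> d"
  shows "real d * wmin w d k \<le> real k * Wtot w d"
proof -
  define m where "m = d - k"
  have split: "{1..d} = {1..m} \<union> {m+1..d}" and d: "real d = real m + real k"
    using assms(2) by (auto simp: m_def)
  have "0 \<le> (\<Sum>i=1..m. \<Sum>j=m+1..d. w i - w j)"
    by (intro sum_nonneg) (auto intro: mono)
  also have "\<dots> = real k * (\<Sum>i=1..m. w i) - real m * (\<Sum>j=m+1..d. w j)"
    using assms(2) by (simp add: sum_subtractf sum_distrib_left m_def)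
  finally show ?thesis
    unfolding wmin_def Wtot_def split d
    by (simp add: sum.union_disjoint m_def algebra_simps)
qed

lemma finite_committees: "finite (committees d k)"
  unfolding committees_def by (rule finite_subset[of _ "Pow {1..d}"]) auto

lemma card_committees: "card (committees d k) = d choose k"
  unfolding committees_def using n_subsets[of "{1..d}" k] by simp

lemma committee_atLeastAtMost: "k \<le> d \<Longrightarrow> {1..k} \<in> committees d k"
  unfolding committees_def by auto

lemma card_committees_containing:
  assumes "j \<in> {1..d}" "k \<ge> 1"
  shows "card {S \<in> committees d k. j \<in> S} = (d - 1) choose (k - 1)"
proof -
  let ?T = "{T. T \<subseteq> {1..d} - {j} \<and> card T = k - 1}"
  have "{S \<in> committees d k. j \<in> S} = insert j ` ?T"
  proof (intro equalityI subsetI)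
    fix S assume "S \<in> {S \<in> committees d k. j \<in> S}"
    then have "S = insert j (S - {j})" "S - {j} \<in> ?T"
      by (auto simp: committees_def)
    then show "S \<in> insert j ` ?T" by blast
  next
    fix S assume "S \<in> insert j ` ?T"
    then obtain T where T: "S = insert j T" "T \<subseteq> {1..d} - {j}" "card T = k - 1" by blast
    then have "j \<notin> T" "finite T" by (auto intro: finite_subset)
    then have "card S = k"
      using T assms by simp
    then show "S \<in> {S \<in> committees d k. j \<in> S}"
      using T assms by (auto simp: committees_def)
  qed
  moreover have "inj_on (insert j) ?T"
    by (rule inj_onI) (metis Diff_insert_absorb Diff_iff insertI1 mem_Collect_eq subsetD)
  ultimately show ?thesis
    using assms n_subsets[of "{1..d} - {j}" "k - 1"] by (simp add: card_image)
qed

lemma sum_sum_committees: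
  assumes "k \<ge> 1"
  shows "(\<Sum>S\<in>committees d k. \<Sum>j\<in>S. v j) = of_nat ((d - 1) choose (k - 1)) * (\<Sum>j=1..d. v j)"
proof -
  have "(\<Sum>S\<in>committees d k. \<Sum>j\<in>S. v j) = (\<Sum>S\<in>committees d k. \<Sum>j=1..d. if j \<in> S then v j else 0)"
  proof (rule sum.cong[OF refl])
    fix S assume "S \<in> committees d k"
    then have "{1..d} \<inter> S = S" by (auto simp: committees_def)
    then show "(\<Sum>j\<in>S. v j) = (\<Sum>j=1..d. if j \<in> S then v j else 0)"
      using sum.inter_restrict[of "{1..d}" v S] by simp
  qed
  also have "\<dots> = (\<Sum>j=1..d. \<Sum>S\<in>{S \<in> committees d k. j \<in> S}. v j)"
    by (subst sum.swap) (simp add: sum.inter_filter[symmetric] finite_committees)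
  also have "\<dots> = (\<Sum>j=1..d. of_nat ((d - 1) choose (k - 1)) * v j)"
    using assms by (intro sum.cong refl) (simp add: card_committees_containing)
  finally show ?thesis by (simp add: sum_distrib_left)
qed

lemma sum_scored_vote:
  assumes "is_vote d \<sigma>"
  shows "(\<Sum>j=1..d. scored_vote w \<sigma> j) = Wtot w d"
  using sum.reindex_bij_betw[OF assms[unfolded is_vote_def], of w]
  by (simp add: scored_vote_def Wtot_def)

lemma Phi_eq:
  "Phi \<epsilon> w d k = real (d choose k) *
     ((exp \<epsilon> - 1) * (real k / real d * Wtot w d - wmin w d k) + (wmax w d k - wmin w d k))
     / (wmax w d k - wmin w d k)"
  unfolding Phi_def by (simp add: algebra_simps)

lemma Phi_pos:
  assumes "\<epsilon> > 0"
    and mono: "\<And>i j. 1 \<le> i \<Longrightarrow> i \<le> j \<Longrightarrow> j \<le> d \<Longrightarrow> w j \<le> w i"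
    and "1 \<le> k" "k \<le> d" "wmin w d k < wmax w d k"
  shows "Phi \<epsilon> w d k > 0"
proof -
  have "real d * wmin w d k \<le> real k * Wtot w d"
    using wmin_le_mean[OF mono \<open>k \<le> d\<close>] .
  then have "wmin w d k \<le> real k / real d * Wtot w d"
    using assms(3,4) by (simp add: field_simps)
  then show ?thesis
    unfolding Phi_eq using assms by (simp add: add_nonneg_pos)
qed

lemma sum_prob_add_eq_1:
  assumes "\<epsilon> > 0"
    and mono: "\<And>i j. 1 \<le> i \<Longrightarrow> i \<le> j \<Longrightarrow> j \<le> d \<Longrightarrow> w j \<le> w i"
    and "1 \<le> k" "k \<le> d" "wmin w d k < wmax w d k"
    and v: "(\<Sum>j=1..d. v j) = Wtot w d"
  shows "(\<Sum>S\<in>committees d k. prob_add \<epsilon> w d k v S) = 1"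
proof -
  define E where "E = exp \<epsilon> - 1"
  define D where "D = wmax w d k - wmin w d k"
  define N where "N = real (d choose k)"
  define m where "m = wmin w d k"
  define W where "W = Wtot w d"
  have D: "D > 0" using assms(5) by (simp add: D_def)
  have "k * (d choose k) = d * ((d - 1) choose (k - 1))"
    using binomial_absorption[of "k - 1" d] assms(3) by simp
  then have "real k * N = real d * real ((d - 1) choose (k - 1))"
    unfolding N_def by (metis of_nat_mult)
  then have inner: "(\<Sum>S\<in>committees d k. \<Sum>j\<in>S. v j) = real k / real d * N * W"
    using sum_sum_committees[where k=k and d=d and v=v] v assms(3,4)
    by (simp add: W_def field_simps)
  have "E / D * (real k / real d * N * W - N * m) + N = N * (E * (real k / real d * W - m) + D) / D"
    using D by (simp add: field_simps)
  also have "\<dots> = Phi \<epsilon> w d k"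
    unfolding Phi_eq E_def D_def N_def m_def W_def ..
  finally have numerator: "E / D * (real k / real d * N * W - N * m) + N = Phi \<epsilon> w d k" .
  have "prob_add \<epsilon> w d k v S = (E / D * ((\<Sum>j\<in>S. v j) - m) + 1) / Phi \<epsilon> w d k" for S
    unfolding prob_add_def E_def D_def m_def by (simp add: add_divide_distrib)
  then have "(\<Sum>S\<in>committees d k. prob_add \<epsilon> w d k v S)
      = (E / D * ((\<Sum>S\<in>committees d k. \<Sum>j\<in>S. v j) - N * m) + N) / Phi \<epsilon> w d k"
    by (simp add: sum_divide_distrib[symmetric] sum.distrib sum_distrib_left[symmetric]
        sum_subtractf card_committees N_def)
  also have "\<dots> = 1"
    unfolding inner numerator using Phi_pos[OF assms(1-5)] by simp
  finally show ?thesis .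
qed

lemma l1_priv_view:
  assumes "S \<in> committees d k"
  shows "l1 d (priv_view \<epsilon> w d k S) =
     real k * \<bar>a_k \<epsilon> w d k - b_k \<epsilon> w d k\<bar> + real (d - k) * \<bar>b_k \<epsilon> w d k\<bar>"
proof -
  have S: "S \<subseteq> {1..d}" "card S = k" using assms by (auto simp: committees_def)
  have "l1 d (priv_view \<epsilon> w d k S)
      = (\<Sum>j=1..d. if j \<in> S then \<bar>a_k \<epsilon> w d k - b_k \<epsilon> w d k\<bar> else \<bar>b_k \<epsilon> w d k\<bar>)"
    unfolding l1_def priv_view_def by (intro sum.cong) auto
  then show ?thesis using S by (simp add: sum_if_mem card_Diff_subset finite_subset)
qed

lemma l1_priv_view_diff:
  assumes "S \<in> committees d k" "T \<in> committees d k"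
  shows "l1 d (\<lambda>j. priv_view \<epsilon> w d k S j - priv_view \<epsilon> w d k T j) \<le> 2 * real k * \<bar>a_k \<epsilon> w d k\<bar>"
proof -
  let ?a = "a_k \<epsilon> w d k"
  have ST: "S \<subseteq> {1..d}" "T \<subseteq> {1..d}" "card S = k" "card T = k"
    using assms by (auto simp: committees_def)
  have "l1 d (\<lambda>j. priv_view \<epsilon> w d k S j - priv_view \<epsilon> w d k T j)
      = (\<Sum>j=1..d. \<bar>(if j \<in> S then ?a else 0) - (if j \<in> T then ?a else 0)\<bar>)"
    unfolding l1_def priv_view_def by (intro sum.cong) auto
  also have "\<dots> \<le> (\<Sum>j=1..d. (if j \<in> S then \<bar>?a\<bar> else 0) + (if j \<in> T then \<bar>?a\<bar> else 0))"
    by (intro sum_mono) auto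
  also have "\<dots> = 2 * real k * \<bar>?a\<bar>"
    using ST by (simp add: sum.distrib sum_if_mem)
  finally show ?thesis .
qed

theorem theorem6p5:
  fixes \<epsilon> :: real and w :: "nat \<Rightarrow> real" and d k n :: nat
  assumes "\<epsilon> > 0" and "n \<ge> 1"
    and "\<And>i j. 1 \<le> i \<Longrightarrow> i \<le> j \<Longrightarrow> j \<le> d \<Longrightarrow> w j \<le> w i"
    and "1 \<le> k" and "k \<le> d - 1"
    and "wmax w d k > wmin w d k"
  shows "risk_MM \<epsilon> w d k n =
           (real k * \<bar>a_k \<epsilon> w d k - b_k \<epsilon> w d k\<bar> + real (d - k) * \<bar>b_k \<epsilon> w d k\<bar>) / real n
    \<and> (\<forall>\<sigma>. is_vote d \<sigma> \<longrightarrow> risk_EM \<epsilon> w d k n (scored_vote w \<sigma>) =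
           (real k * \<bar>a_k \<epsilon> w d k - b_k \<epsilon> w d k\<bar> + real (d - k) * \<bar>b_k \<epsilon> w d k\<bar>) / real n)
    \<and> risk_DD \<epsilon> w d k \<le> 2 * real k * \<bar>a_k \<epsilon> w d k\<bar>"
proof -
  define c where "c = real k * \<bar>a_k \<epsilon> w d k - b_k \<epsilon> w d k\<bar> + real (d - k) * \<bar>b_k \<epsilon> w d k\<bar>"
  have kd: "k \<le> d" using assms(4,5) by linarith
  have l1: "l1 d (priv_view \<epsilon> w d k S) = c" if "S \<in> committees d k" for S
    using l1_priv_view[OF that] by (simp add: c_def)
  have "(\<lambda>x. l1 d x / real n) ` views \<epsilon> w d k = {c / real n}"
    using committee_atLeastAtMost[OF kd] l1 unfolding views_def image_image by auto
  then have MM: "risk_MM \<epsilon> w d k n = c / real n"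
    unfolding risk_MM_def by simp
  have EM: "risk_EM \<epsilon> w d k n (scored_vote w \<sigma>) = c / real n" if "is_vote d \<sigma>" for \<sigma>
  proof -
    have "risk_EM \<epsilon> w d k n (scored_vote w \<sigma>)
        = (\<Sum>S\<in>committees d k. prob_add \<epsilon> w d k (scored_vote w \<sigma>) S) * (c / real n)"
      unfolding risk_EM_def sum_distrib_right by (simp add: l1)
    then show ?thesis
      using sum_prob_add_eq_1[OF assms(1,3,4) kd assms(6) sum_scored_vote[OF that]] by simp
  qed
  have DD: "risk_DD \<epsilon> w d k \<le> 2 * real k * \<bar>a_k \<epsilon> w d k\<bar>"
    unfolding risk_DD_def views_def using committee_atLeastAtMost[OF kd]
    by (subst Max_le_iff) (auto simp: finite_committees intro: l1_priv_view_diff)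
  show ?thesis
    using MM EM DD by (simp add: c_def)
qed

end
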